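(* Let $k\geq 2$, $m\geq 3$, and $n\in\mathbb{N}$. There is no $[n,k]_2$ classical code $C$ with encoding function $\mathrm{Enc}:\mathbb{F}_{2^k}\to\mathbb{F}_2^n$ such that the collection $(C^{(h)};\mathrm{Enc}^{(h)})_{h\in[m]}$ with $(C^{(h)};\mathrm{Enc}^{(h)})=(C;\mathrm{Enc})$ for every $h\in[m]$ is $m$-multiplication-friendly.
   Context: $x*y$ is the componentwise product. An encoding function of an $[n,k]_q$ classical (linear) code $C\subseteq\mathbb{F}_q^n$ is an $\mathbb{F}_q$-linear isomorphism $\mathrm{Enc}:\mathbb{F}_{q^k}\to C$. A collection $(C^{(h)};\mathrm{Enc}^{(h)})_{h\in[m]}$ of $[n,k]_q$ codes is $m$-multiplication-friendly if there is an $\mathbb{F}_q$-linear $\mathrm{Dec}:\mathbb{F}_q^n\to\mathbb{F}_{q^k}$ with $z_1\cdots z_m=\mathrm{Dec}(\mathrm{Enc}^{(1)}(z_1)*\cdots*\mathrm{Enc}^{(m)}(z_m))$ for all $z_1,\dots,z_m\in\mathbb{F}_{q^k}$. *)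

theory Defs
  imports Main "HOL-Library.Z2"
begin

text \<open>F_2 is the field type bit. The extension field F_{2^k} is a finite field type 'k with
  CARD('k) = 2^k. The F_2-vector-space structure on it is the action of its prime subfield:\<close>

definition f2_scale :: "bit \<Rightarrow> 'k::field \<Rightarrow> 'k" where
  "f2_scale c x = (if c = 1 then x else 0)"

text \<open>F_2^n is represented by functions nat => bit vanishing at indices >= n.\<close>

definition F2vec :: "nat \<Rightarrow> (nat \<Rightarrow> bit) set" where
  "F2vec n = {v. \<forall>i\<ge>n. v i = 0}"

definition f2_linear_enc :: "nat \<Rightarrow> ('k::field \<Rightarrow> (nat \<Rightarrow> bit)) \<Rightarrow> bool" where
  "f2_linear_enc n Enc \<longleftrightarrow> (\<forall>z. Enc z \<in> F2vec n)
     \<and> (\<forall>x y. Enc (x + y) = (\<lambda>i. Enc x i + Enc y i))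
     \<and> (\<forall>c x. Enc (f2_scale c x) = (\<lambda>i. c * Enc x i))"

definition f2_linear_dec :: "nat \<Rightarrow> ((nat \<Rightarrow> bit) \<Rightarrow> 'k::field) \<Rightarrow> bool" where
  "f2_linear_dec n Dec \<longleftrightarrow>
     (\<forall>u\<in>F2vec n. \<forall>v\<in>F2vec n. Dec (\<lambda>i. u i + v i) = Dec u + Dec v)
     \<and> (\<forall>c. \<forall>u\<in>F2vec n. Dec (\<lambda>i. c * u i) = f2_scale c (Dec u))"

definition is_encoding :: "nat \<Rightarrow> (nat \<Rightarrow> bit) set \<Rightarrow> ('k::field \<Rightarrow> (nat \<Rightarrow> bit)) \<Rightarrow> bool" where
  "is_encoding n C Enc \<longleftrightarrow> C \<subseteq> F2vec n \<and> f2_linear_enc n Enc \<and> bij_betw Enc UNIV C"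

definition mult_friendly_copies :: "nat \<Rightarrow> nat \<Rightarrow> ('k::field \<Rightarrow> (nat \<Rightarrow> bit)) \<Rightarrow> bool" where
  "mult_friendly_copies n m Enc \<longleftrightarrow>
     (\<exists>Dec. f2_linear_dec n Dec \<and>
        (\<forall>z :: nat \<Rightarrow> 'k. (\<Prod>h<m. z h) = Dec (\<lambda>i. \<Prod>h<m. Enc (z h) i)))"

end

theory Submission
  imports Defs
begin

text \<open>Over F_2 the componentwise product is idempotent, so the encoded products of
  (x, x, 1, ..., 1) and (x, 1, 1, ..., 1) coincide as soon as there are at least three factors.
  Decoding them gives x^2 = x for every x in F_{2^k}, so this field has at most two elements,
  contradicting k >= 2.\<close>

lemma bit_power_pos: "0 < n \<Longrightarrow> (c::bit) ^ n = c"
  by (cases c) simp_all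

lemma prod_lessThan_if_less:
  fixes a b :: "'a::comm_monoid_mult"
  assumes "j \<le> m"
  shows "(\<Prod>h<m. if h < j then a else b) = a ^ j * b ^ (m - j)"
proof -
  have "{..<m} = {..<j} \<union> {j..<m}" using assms by auto
  then have "(\<Prod>h<m. if h < j then a else b)
      = (\<Prod>h<j. if h < j then a else b) * (\<Prod>h\<in>{j..<m}. if h < j then a else b)"
    by (simp add: prod.union_disjoint ivl_disj_int_one(2))
  then show ?thesis by simp
qed

lemma mult_friendly_copies_idempotent:
  fixes Enc :: "'k::field \<Rightarrow> (nat \<Rightarrow> bit)" and x :: 'k
  assumes "m \<ge> 3" and "mult_friendly_copies n m Enc"
  shows "x * x = x"
proof -
  obtain Dec where Dec: "\<And>z :: nat \<Rightarrow> 'k. (\<Prod>h<m. z h) = Dec (\<lambda>i. \<Prod>h<m. Enc (z h) i)"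
    using assms(2) unfolding mult_friendly_copies_def by blast
  let ?z = "\<lambda>j h::nat. if h < j then x else 1"
  have encoded: "(\<lambda>i. \<Prod>h<m. Enc (?z j h) i) = (\<lambda>i. Enc x i * Enc 1 i)"
    if "0 < j" "j < m" for j
  proof
    fix i
    have "(\<Prod>h<m. Enc (?z j h) i) = (\<Prod>h<m. if h < j then Enc x i else Enc 1 i)"
      by (rule prod.cong) auto
    also have "\<dots> = Enc x i * Enc 1 i"
      using that by (simp add: prod_lessThan_if_less bit_power_pos)
    finally show "(\<Prod>h<m. Enc (?z j h) i) = Enc x i * Enc 1 i" .
  qed
  have "x ^ 2 = (\<Prod>h<m. ?z 2 h)"
    using assms(1) by (simp add: prod_lessThan_if_less)
  also have "\<dots> = (\<Prod>h<m. ?z 1 h)"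
    using Dec[of "?z 2"] Dec[of "?z 1"] encoded[of 2] encoded[of 1] assms(1) by simp
  also have "\<dots> = x"
    using assms(1) by (simp add: prod_lessThan_if_less)
  finally show ?thesis by (simp add: power2_eq_square)
qed

lemma card_UNIV_le_2_if_idempotent:
  assumes "\<And>x::'a::field. x * x = x"
  shows "card (UNIV :: 'a set) \<le> 2"
proof -
  have "UNIV \<subseteq> {0, 1 :: 'a}"
  proof
    fix x :: 'a
    have "x * (x - 1) = 0" using assms[of x] by (simp add: algebra_simps)
    then show "x \<in> {0, 1}" by auto
  qed
  then have "card (UNIV :: 'a set) \<le> card {0, 1 :: 'a}"
    by (intro card_mono) auto
  also have "\<dots> \<le> 2" by (simp add: card_insert_if)
  finally show ?thesis .
qed

theorem mainTheorem9:
  fixes k m n :: nat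
    and C :: "(nat \<Rightarrow> bit) set"
    and Enc :: "'K::{field,finite} \<Rightarrow> (nat \<Rightarrow> bit)"
  assumes "k \<ge> 2" and "m \<ge> 3"
    and "card (UNIV :: 'K set) = 2 ^ k"
  shows "\<not> (is_encoding n C Enc \<and> mult_friendly_copies n m Enc)"
proof
  assume "is_encoding n C Enc \<and> mult_friendly_copies n m Enc"
  then have "card (UNIV :: 'K set) \<le> 2"
    using mult_friendly_copies_idempotent[OF assms(2)]
    by (intro card_UNIV_le_2_if_idempotent) blast
  moreover have "(2::nat) ^ 2 \<le> 2 ^ k"
    using assms(1) by (intro power_increasing) auto
  ultimately show False using assms(3) by simp
qed

end
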